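(* Let $\Gamma$ be a connected graph of rank $r$ and let $f:\Gamma\to\Gamma$ be an irreducible graph map which is a homotopy equivalence and which has a fold decomposition consisting of a single fold. Then $\Gamma$ is isomorphic to one of $R_r$, $\Delta_k^-$ or $\Delta_k^+$ for some $k\ge 2$. In particular: (i) if $r\equiv 0\pmod 3$ then $\Gamma\cong R_r$ or $\Gamma\cong\Delta_k^-$ (with $3k-3=r$); (ii) if $r\equiv 1\pmod 3$ then $\Gamma\cong R_r$; (iii) if $r\equiv 2\pmod 3$ then $\Gamma\cong R_r$ or $\Gamma\cong\Delta_k^+$ (with $3k-1=r$).
   Context: A graph $\Gamma$ is a finite 1-dimensional CW complex (multiple edges and loops allowed) with a chosen orientation on each edge; $\mathcal{V}\Gamma$, $\mathcal{E}\Gamma$, $\mathcal{E}^{\pm}\Gamma$ denote vertices, edges, and edges with both orientations; $\bar e$ is the reverse of $e$ and $\iota(e),\tau(e)$ its initial/terminal vertices. The rank of a connected graph is $|\mathcal{E}\Gamma|-|\mathcal{V}\Gamma|+1$. An edge path is a nonempty concatenation $e_1\cdots e_k$ of oriented edges with $\tau(e_i)=\iota(e_{i+1})$; it traverses $e$ if $e$ or $\bar e$ occurs in it. A graph map $f:\Gamma_1\to\Gamma_2$ consists of a vertex map $f_V$ and an edge path $f(e)$ for each $e\in\mathcal{E}^\pm\Gamma_1$ with $\iota(f(e))=f_V(\iota(e))$ and $f(\bar e)=\overline{f(e)}$; it is regarded as a continuous map. A graph isomorphism is a graph map with $f_V$ bijective and restricting to a bijection from $\mathcal{E}^\pm\Gamma_1$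 onto the single edges $\mathcal{E}^\pm\Gamma_2$. The transition matrix $T(f)$ of a self map has $(i,j)$ entry the number of times $f(e_i)$ traverses $e_j$; $f$ is irreducible if $T(f)$ is an irreducible matrix and every vertex of $\Gamma$ has valence at least $3$. Folds: for distinct oriented edges $e_0,e_1$ with $e_1\neq\bar e_0$ and $\iota(e_0)=\iota(e_1)$: the proper full fold of $e_1$ over $e_0$ subdivides $e_1=e_1''e_1'$ and identifies $e_1''$ with $e_0$ (map $e_1\mapsto e_0e_1'$, other edges fixed); the complete fold identifies $e_0$ and $e_1$ entirely; the partial fold subdivides $e_0=e_0'e_0''$, $e_1=e_1''e_1'$ and identifies $e_1''$ with $e_0'$. A fold decomposition with $m$ folds is an expression $f=h\circ f_m\circ\cdots\circ f_1$ with $\Gamma_1=\Gamma$, each $f_i:\Gamma_i\to\Gamma_{i+1}$ a fold, and $h:\Gamma_{m+1}\to\Gamma$ a graph isomorphism. Graphs: the $s$-gonal graph of depth $k$, $P_{s,k}$, has vertices $v_0,\dots,v_{s-1}$ and edges $e_i^j$ ($0\le i\le s-1$, $1\le j\le k$) with $e_i^j$ joining $v_i$ to $v_{i+1}$ (indices mod $s$). The rose $R_r=P_{1,r}$ is one vertex with $r$ loops. $\Delta_k^-$ is $P_{3,k}$ with one edge removed (rank $3k-3$); $\Delta_k^+$ is $P_{3,k+1}$ with two edges from two distinct sides $\{e_i^j:1\le j\le k+1\}$ removed (rank $3k-1$). *)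

theory Defs
  imports "HOL-Analysis.Analysis"
begin

record graph =
  verts :: "nat set"
  edges :: "nat set"
  src :: "nat \<Rightarrow> nat"
  tgt :: "nat \<Rightarrow> nat"

definition wf_graph :: "graph \<Rightarrow> bool" where
  "wf_graph G \<longleftrightarrow> finite (verts G) \<and> finite (edges G) \<and>
     (\<forall>e\<in>edges G. src G e \<in> verts G \<and> tgt G e \<in> verts G)"

text \<open>Oriented edges: (e, True) is e with its chosen orientation, (e, False) is its reverse.\<close>

type_synonym oedge = "nat \<times> bool"

definition oedges :: "graph \<Rightarrow> oedge set" where
  "oedges G = edges G \<times> UNIV"

definition orev :: "oedge \<Rightarrow> oedge" where
  "orev x = (fst x, \<not> snd x)"

definition oinit :: "graph \<Rightarrow> oedge \<Rightarrow> nat" where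
  "oinit G x = (if snd x then src G (fst x) else tgt G (fst x))"

definition oterm :: "graph \<Rightarrow> oedge \<Rightarrow> nat" where
  "oterm G x = oinit G (orev x)"

definition is_path :: "graph \<Rightarrow> oedge list \<Rightarrow> bool" where
  "is_path G p \<longleftrightarrow> p \<noteq> [] \<and> set p \<subseteq> oedges G \<and>
     (\<forall>i. Suc i < length p \<longrightarrow> oterm G (p ! i) = oinit G (p ! Suc i))"

definition rev_path :: "oedge list \<Rightarrow> oedge list" where
  "rev_path p = rev (map orev p)"

definition connected_graph :: "graph \<Rightarrow> bool" where
  "connected_graph G \<longleftrightarrow> verts G \<noteq> {} \<and>
     (\<forall>u\<in>verts G. \<forall>v\<in>verts G. u = v \<or>
        (\<exists>p. is_path G p \<and> oinit G (hd p) = u \<and> oterm G (last p) = v))"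

definition rank :: "graph \<Rightarrow> int" where
  "rank G = int (card (edges G)) - int (card (verts G)) + 1"

definition valence :: "graph \<Rightarrow> nat \<Rightarrow> nat" where
  "valence G v = card {x \<in> oedges G. oinit G x = v}"

record gmap =
  vmap :: "nat \<Rightarrow> nat"
  emap :: "oedge \<Rightarrow> oedge list"

definition graph_map :: "graph \<Rightarrow> graph \<Rightarrow> gmap \<Rightarrow> bool" where
  "graph_map G H f \<longleftrightarrow> (\<forall>v\<in>verts G. vmap f v \<in> verts H) \<and>
     (\<forall>x\<in>oedges G. is_path H (emap f x) \<and> oinit H (hd (emap f x)) = vmap f (oinit G x)
        \<and> emap f (orev x) = rev_path (emap f x))"

definition gcomp :: "gmap \<Rightarrow> gmap \<Rightarrow> gmap" where
  "gcomp g f = \<lparr>vmap = vmap g \<circ> vmap f, emap = (\<lambda>x. concat (map (emap g) (emap f x)))\<rparr>"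

definition map_eq :: "graph \<Rightarrow> gmap \<Rightarrow> gmap \<Rightarrow> bool" where
  "map_eq G f g \<longleftrightarrow> (\<forall>v\<in>verts G. vmap f v = vmap g v) \<and> (\<forall>x\<in>oedges G. emap f x = emap g x)"

definition graph_iso :: "graph \<Rightarrow> graph \<Rightarrow> gmap \<Rightarrow> bool" where
  "graph_iso G H h \<longleftrightarrow> graph_map G H h \<and> bij_betw (vmap h) (verts G) (verts H) \<and>
     (\<forall>x\<in>oedges G. length (emap h x) = 1) \<and>
     bij_betw (\<lambda>x. hd (emap h x)) (oedges G) (oedges H)"

definition isomorphic :: "graph \<Rightarrow> graph \<Rightarrow> bool" where
  "isomorphic G H \<longleftrightarrow> (\<exists>h. graph_iso G H h)"

definition trans_mat :: "gmap \<Rightarrow> nat \<Rightarrow> nat \<Rightarrow> nat" where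
  "trans_mat f i j = count_list (emap f (i, True)) (j, True) + count_list (emap f (i, True)) (j, False)"

fun mat_pow :: "nat set \<Rightarrow> (nat \<Rightarrow> nat \<Rightarrow> nat) \<Rightarrow> nat \<Rightarrow> nat \<Rightarrow> nat \<Rightarrow> nat" where
  "mat_pow I A 0 = (\<lambda>i j. if i = j then 1 else 0)"
| "mat_pow I A (Suc n) = (\<lambda>i j. \<Sum>k\<in>I. mat_pow I A n i k * A k j)"

definition irreducible_matrix :: "nat set \<Rightarrow> (nat \<Rightarrow> nat \<Rightarrow> nat) \<Rightarrow> bool" where
  "irreducible_matrix I A \<longleftrightarrow> (\<forall>i\<in>I. \<forall>j\<in>I. \<exists>m>0. mat_pow I A m i j > 0)"

definition irreducible_map :: "graph \<Rightarrow> gmap \<Rightarrow> bool" where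
  "irreducible_map G f \<longleftrightarrow> irreducible_matrix (edges G) (trans_mat f) \<and>
     (\<forall>v\<in>verts G. valence G v \<ge> 3)"

text \<open>Vertex v is realized as the unit vector at coordinate (0,v); edge e as the polygonal
  arc src e -> (1,e) -> (2,e) -> tgt e in the product space of real-valued functions on
  nat x nat (product topology). Loops become triangles, so the realization is homeomorphic
  to the CW complex.\<close>

definition unitv :: "nat \<times> nat \<Rightarrow> (nat \<times> nat \<Rightarrow> real)" where
  "unitv i = (\<lambda>j. if j = i then 1 else 0)"

definition seg :: "(nat \<times> nat \<Rightarrow> real) \<Rightarrow> (nat \<times> nat \<Rightarrow> real) \<Rightarrow> real \<Rightarrow> (nat \<times> nat \<Rightarrow> real)" where
  "seg a b s = (\<lambda>j. (1 - s) * a j + s * b j)"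

definition epoint :: "graph \<Rightarrow> nat \<Rightarrow> real \<Rightarrow> (nat \<times> nat \<Rightarrow> real)" where
  "epoint G e t =
     (if t \<le> 1/3 then seg (unitv (0, src G e)) (unitv (1, e)) (3 * t)
      else if t \<le> 2/3 then seg (unitv (1, e)) (unitv (2, e)) (3 * t - 1)
      else seg (unitv (2, e)) (unitv (0, tgt G e)) (3 * t - 2))"

definition opoint :: "graph \<Rightarrow> oedge \<Rightarrow> real \<Rightarrow> (nat \<times> nat \<Rightarrow> real)" where
  "opoint G x s = epoint G (fst x) (if snd x then s else 1 - s)"

definition ppoint :: "graph \<Rightarrow> oedge list \<Rightarrow> real \<Rightarrow> (nat \<times> nat \<Rightarrow> real)" where
  "ppoint G p t = (let k = length p; i = min (k - 1) (nat \<lfloor>real k * t\<rfloor>)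
                   in opoint G (p ! i) (real k * t - real i))"

definition realization :: "graph \<Rightarrow> (nat \<times> nat \<Rightarrow> real) set" where
  "realization G = (\<lambda>v. unitv (0, v)) ` verts G \<union> (\<Union>e\<in>edges G. epoint G e ` {0..1})"

definition real_top :: "graph \<Rightarrow> (nat \<times> nat \<Rightarrow> real) topology" where
  "real_top G = subtopology (powertop_real UNIV) (realization G)"

definition real_map :: "graph \<Rightarrow> graph \<Rightarrow> gmap \<Rightarrow> (nat \<times> nat \<Rightarrow> real) \<Rightarrow> (nat \<times> nat \<Rightarrow> real)" where
  "real_map G H f x = (SOME y.
      (\<exists>v\<in>verts G. x = unitv (0, v) \<and> y = unitv (0, vmap f v)) \<or>
      (\<exists>e\<in>edges G. \<exists>t\<in>{0..1}. x = epoint G e t \<and> y = ppoint H (emap f (e, True)) t))"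

definition homotopy_equivalence :: "graph \<Rightarrow> graph \<Rightarrow> gmap \<Rightarrow> bool" where
  "homotopy_equivalence G H f \<longleftrightarrow>
     (let F = real_map G H f in
      continuous_map (real_top G) (real_top H) F \<and>
      (\<exists>g. continuous_map (real_top H) (real_top G) g \<and>
           homotopic_with (\<lambda>_. True) (real_top G) (real_top G) (g \<circ> F) id \<and>
           homotopic_with (\<lambda>_. True) (real_top H) (real_top H) (F \<circ> g) id))"

definition set_oinit :: "graph \<Rightarrow> oedge \<Rightarrow> nat \<Rightarrow> graph" where
  "set_oinit G x v = (if snd x then G\<lparr>src := (src G)(fst x := v)\<rparr>
                      else G\<lparr>tgt := (tgt G)(fst x := v)\<rparr>)"

definition fold_precond :: "graph \<Rightarrow> oedge \<Rightarrow> oedge \<Rightarrow> bool" where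
  "fold_precond G e0 e1 \<longleftrightarrow> e0 \<in> oedges G \<and> e1 \<in> oedges G \<and> e0 \<noteq> e1 \<and> e1 \<noteq> orev e0 \<and>
     oinit G e0 = oinit G e1"

text \<open>Proper full fold of e1 over e0: e1 = e1'' e1', e1'' identified with e0; the remaining
  piece e1' keeps the name of e1 and now starts at the terminal vertex of e0.\<close>
definition full_fold_graph :: "graph \<Rightarrow> oedge \<Rightarrow> oedge \<Rightarrow> graph" where
  "full_fold_graph G e0 e1 = set_oinit G e1 (oterm G e0)"

definition full_fold_map :: "oedge \<Rightarrow> oedge \<Rightarrow> gmap" where
  "full_fold_map e0 e1 = \<lparr>vmap = id, emap = (\<lambda>x. if x = e1 then [e0, e1]
      else if x = orev e1 then [orev e1, orev e0] else [x])\<rparr>"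

text \<open>Complete fold: e1 identified with e0 (so the terminal vertices get identified).\<close>
definition cf_quot :: "graph \<Rightarrow> oedge \<Rightarrow> oedge \<Rightarrow> nat \<Rightarrow> nat" where
  "cf_quot G e0 e1 u = (if u = oterm G e1 then oterm G e0 else u)"

definition complete_fold_graph :: "graph \<Rightarrow> oedge \<Rightarrow> oedge \<Rightarrow> graph" where
  "complete_fold_graph G e0 e1 = \<lparr>verts = cf_quot G e0 e1 ` verts G, edges = edges G - {fst e1},
      src = cf_quot G e0 e1 \<circ> src G, tgt = cf_quot G e0 e1 \<circ> tgt G\<rparr>"

definition complete_fold_map :: "graph \<Rightarrow> oedge \<Rightarrow> oedge \<Rightarrow> gmap" where
  "complete_fold_map G e0 e1 = \<lparr>vmap = cf_quot G e0 e1, emap = (\<lambda>x. if x = e1 then [e0]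
      else if x = orev e1 then [orev e0] else [x])\<rparr>"

text \<open>Partial fold: e0 = e0' e0'', e1 = e1'' e1', with e1'' identified with e0'. The new
  vertex is w, the common edge e0' = e1'' is the new edge (n, True); e0'' and e1' keep the
  names of e0 and e1.\<close>
definition partial_fold_graph :: "graph \<Rightarrow> oedge \<Rightarrow> oedge \<Rightarrow> nat \<Rightarrow> nat \<Rightarrow> graph" where
  "partial_fold_graph G e0 e1 w n =
     (let G' = set_oinit (set_oinit G e0 w) e1 w in
      G'\<lparr>verts := insert w (verts G), edges := insert n (edges G),
         src := (src G')(n := oinit G e0), tgt := (tgt G')(n := w)\<rparr>)"

definition partial_fold_map :: "oedge \<Rightarrow> oedge \<Rightarrow> nat \<Rightarrow> gmap" where
  "partial_fold_map e0 e1 n = \<lparr>vmap = id, emap = (\<lambda>x.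
      if x = e0 then [(n, True), e0] else if x = orev e0 then [orev e0, (n, False)]
      else if x = e1 then [(n, True), e1] else if x = orev e1 then [orev e1, (n, False)]
      else [x])\<rparr>"

definition is_fold :: "graph \<Rightarrow> graph \<Rightarrow> gmap \<Rightarrow> bool" where
  "is_fold G H \<phi> \<longleftrightarrow> (\<exists>e0 e1. fold_precond G e0 e1 \<and>
     ((H = full_fold_graph G e0 e1 \<and> \<phi> = full_fold_map e0 e1) \<or>
      (H = complete_fold_graph G e0 e1 \<and> \<phi> = complete_fold_map G e0 e1) \<or>
      (\<exists>w n. w \<notin> verts G \<and> n \<notin> edges G \<and>
          H = partial_fold_graph G e0 e1 w n \<and> \<phi> = partial_fold_map e0 e1 n)))"

definition single_fold_decomp :: "graph \<Rightarrow> gmap \<Rightarrow> bool" where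
  "single_fold_decomp G f \<longleftrightarrow>
     (\<exists>H \<phi> h. is_fold G H \<phi> \<and> graph_iso H G h \<and> map_eq G f (gcomp h \<phi>))"

text \<open>s-gonal graph of depth k: vertex i (i < s); edge e_i^j is encoded as i*k + (j-1),
  joining vertex i to vertex (i+1) mod s.\<close>
definition polygonal :: "nat \<Rightarrow> nat \<Rightarrow> graph" where
  "polygonal s k = \<lparr>verts = {0..<s}, edges = {0..<s * k},
      src = (\<lambda>e. e div k), tgt = (\<lambda>e. (e div k + 1) mod s)\<rparr>"

definition rose :: "nat \<Rightarrow> graph" where
  "rose r = polygonal 1 r"

text \<open>Delta_k^-: P_{3,k} minus the edge e_0^k.\<close>
definition delta_minus :: "nat \<Rightarrow> graph" where
  "delta_minus k = (polygonal 3 k)\<lparr>edges := edges (polygonal 3 k) - {k - 1}\<rparr>"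

text \<open>Delta_k^+: P_{3,k+1} minus e_0^{k+1} and e_1^{k+1} (from two distinct sides).\<close>
definition delta_plus :: "nat \<Rightarrow> graph" where
  "delta_plus k = (polygonal 3 (k + 1))\<lparr>edges := edges (polygonal 3 (k + 1)) - {k, 2 * k + 1}\<rparr>"

end

theory Submission
  imports Defs
begin

text \<open>
  Only a full fold preserves the number of edges, so \<open>f = h \<circ> \<phi>\<close> where \<open>\<phi>\<close> folds an initial
  segment of \<open>e\<^sub>1\<close> over \<open>e\<^sub>0\<close> and \<open>h\<close> is an isomorphism from the folded graph onto \<open>\<Gamma>\<close>.
  Thus \<open>f\<close> maps every edge other than \<open>e\<^sub>1\<close> onto a single edge, and irreducibility forces
  the induced edge permutation to be one cycle: the oriented edges \<open>\<tau>\<^sup>m(e\<^sub>1)\<close>,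
  \<open>1 \<le> m \<le> n\<close>, run once through all edges, and \<open>\<tau>\<^sup>m(e\<^sub>1)\<close> goes from \<open>\<beta>\<^sup>m(u)\<close> to
  \<open>\<beta>\<^sup>m(w)\<close>, where \<open>\<tau>, \<beta>\<close> are the edge and vertex maps of \<open>h\<close> and \<open>u, w\<close> are the
  terminal vertices of \<open>e\<^sub>0, e\<^sub>1\<close>. Every vertex is an endpoint of some edge, and
  comparing \<open>e\<^sub>0\<close> with \<open>e\<^sub>1\<close> puts \<open>w\<close> on the \<open>\<beta>\<close>-orbit of \<open>u\<close>; writing \<open>w = \<beta>\<^sup>c(u)\<close> and
  \<open>p\<close> for the length of that orbit, \<open>\<Gamma>\<close> has vertices \<open>\<int>/p\<close> and edges \<open>m \<rightarrow> m + c\<close>. Connectedness gives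
  \<open>gcd(c, p) = 1\<close>, and comparing the endpoints of \<open>e\<^sub>0\<close> and \<open>e\<^sub>1\<close>, which start at the
  same vertex, gives \<open>p | 3c\<close>, so \<open>p \<in> {1, 3}\<close>. For \<open>p = 1\<close> the graph is a rose. For
  \<open>p = 3\<close> the edge \<open>m\<close> lies on the side of the triangle determined by \<open>m mod 3\<close>, so the
  three sides carry \<open>q + 1, q, q\<close> edges if \<open>n = 3q + 1\<close> (this is \<open>\<Delta>\<^sub>q\<^sup>+\<close>) and
  \<open>k, k, k - 1\<close> edges if \<open>n = 3k - 1\<close> (this is \<open>\<Delta>\<^sub>k\<^sup>-\<close>); the handshake lemma with
  valence \<open>\<ge> 3\<close> gives \<open>n \<ge> 5\<close>, hence \<open>q, k \<ge> 2\<close>.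
\<close>

lemma orev_orev [simp]: "orev (orev x) = x"
  by (simp add: orev_def)

lemma orev_neq [simp]: "orev x \<noteq> x" "x \<noteq> orev x"
  by (auto simp: orev_def prod_eq_iff)

lemma fst_orev [simp]: "fst (orev x) = fst x"
  by (simp add: orev_def)

lemma oedges_iff: "x \<in> oedges G \<longleftrightarrow> fst x \<in> edges G"
  by (cases x) (simp add: oedges_def)

lemma orev_in_oedges_iff [simp]: "orev x \<in> oedges G \<longleftrightarrow> x \<in> oedges G"
  by (simp add: oedges_iff)

lemma oinit_orev [simp]: "oinit G (orev x) = oterm G x"
  by (simp add: oterm_def)

lemma oterm_orev [simp]: "oterm G (orev x) = oinit G x"
  by (simp add: oterm_def)

lemma oinit_oterm_simps [simp]:
  "oinit G (e, True) = src G e" "oinit G (e, False) = tgt G e"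
  "oterm G (e, True) = tgt G e" "oterm G (e, False) = src G e"
  by (simp_all add: oterm_def oinit_def orev_def)

lemma fst_eq_iff_orev: "fst x = fst y \<longleftrightarrow> y = x \<or> y = orev x"
  by (cases x; cases y) (auto simp: orev_def)

lemma card_oedges: "card (oedges G) = 2 * card (edges G)"
  by (simp add: oedges_def card_cartesian_product)

lemma oinit_in_verts: "wf_graph G \<Longrightarrow> x \<in> oedges G \<Longrightarrow> oinit G x \<in> verts G"
  by (cases x) (auto simp: wf_graph_def oinit_def oedges_def)

lemma oterm_in_verts: "wf_graph G \<Longrightarrow> x \<in> oedges G \<Longrightarrow> oterm G x \<in> verts G"
  using oinit_in_verts[of G "orev x"] by simp

lemma sum_valence:
  assumes "wf_graph G"
  shows "(\<Sum>y\<in>verts G. valence G y) = 2 * card (edges G)"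
proof -
  have "{y \<in> verts G. oinit G x = y} = {oinit G x}" if "x \<in> oedges G" for x
    using oinit_in_verts[OF assms that] by auto
  then have "\<forall>x\<in>oedges G. card {y \<in> verts G. oinit G x = y} = 1"
    by simp
  moreover have "finite (verts G)" "finite (oedges G)"
    using assms by (simp_all add: wf_graph_def oedges_def)
  ultimately have "(\<Sum>y\<in>verts G. card {x \<in> oedges G. oinit G x = y}) = card (oedges G)"
    using sum_multicount[of "verts G" "oedges G" "\<lambda>y x. oinit G x = y" 1] by simp
  then show ?thesis
    by (simp add: valence_def card_oedges)
qed

lemma is_path_Cons:
  "is_path G (y # ys) \<longleftrightarrow> y \<in> oedges G \<and> (ys = [] \<or> is_path G ys \<and> oterm G y = oinit G (hd ys))"
  by (cases ys) (auto simp: is_path_def nth_Cons split: nat.splits)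

lemma is_path_invariant:
  assumes "is_path G ps" and "\<And>x. x \<in> oedges G \<Longrightarrow> P (oinit G x) \<longleftrightarrow> P (oterm G x)"
  shows "P (oinit G (hd ps)) \<longleftrightarrow> P (oterm G (last ps))"
  using assms(1)
proof (induction ps)
  case (Cons y ys)
  then show ?case
    using assms(2) by (cases "ys = []") (auto simp: is_path_Cons)
qed (simp add: is_path_def)

lemma connected_graph_invariant:
  assumes "connected_graph G" and "\<And>x. x \<in> oedges G \<Longrightarrow> P (oinit G x) \<longleftrightarrow> P (oterm G x)"
    and "s \<in> verts G" "P s" "t \<in> verts G"
  shows "P t"
  using assms is_path_invariant[of G _ P] unfolding connected_graph_def by metis

lemma isomorphicI:
  assumes "bij_betw \<psi> (verts G) (verts X)" and "bij_betw \<eta> (oedges G) (oedges X)"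
    and "\<And>x. x \<in> oedges G \<Longrightarrow> \<eta> (orev x) = orev (\<eta> x)"
    and "\<And>x. x \<in> oedges G \<Longrightarrow> oinit X (\<eta> x) = \<psi> (oinit G x)"
  shows "isomorphic G X"
proof -
  have "graph_iso G X \<lparr>vmap = \<psi>, emap = \<lambda>x. [\<eta> x]\<rparr>"
    using assms by (auto simp: graph_iso_def graph_map_def is_path_def rev_path_def bij_betw_apply)
  then show ?thesis
    unfolding isomorphic_def by blast
qed

lemma graph_iso_card:
  assumes "graph_iso G X h"
  shows "card (verts G) = card (verts X)" and "card (edges G) = card (edges X)"
proof -
  have "bij_betw (vmap h) (verts G) (verts X)" "bij_betw (\<lambda>x. hd (emap h x)) (oedges G) (oedges X)"
    using assms by (simp_all add: graph_iso_def)
  then have "card (verts G) = card (verts X)" "card (oedges G) = card (oedges X)"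
    by (simp_all add: bij_betw_same_card)
  then show "card (verts G) = card (verts X)" "card (edges G) = card (edges X)"
    by (simp_all add: card_oedges)
qed

lemma graph_iso_emap:
  assumes "graph_iso G X h" "x \<in> oedges G"
  shows "emap h x = [hd (emap h x)]"
  using assms by (cases "emap h x") (auto simp: graph_iso_def)

lemma isomorphic_rank:
  assumes "isomorphic G X"
  shows "rank G = rank X"
proof -
  obtain h where "graph_iso G X h"
    using assms unfolding isomorphic_def by blast
  then show ?thesis
    using graph_iso_card by (simp add: rank_def)
qed

lemma isomorphicI_edge_enum:
  fixes x y :: "'i \<Rightarrow> oedge"
  assumes \<psi>: "bij_betw \<psi> (verts G) (verts X)"
    and x: "bij_betw (\<lambda>m. fst (x m)) I (edges G)"
    and y: "bij_betw (\<lambda>m. fst (y m)) I (edges X)"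
    and ends: "\<And>m. m \<in> I \<Longrightarrow> oinit X (y m) = \<psi> (oinit G (x m)) \<and> oterm X (y m) = \<psi> (oterm G (x m))"
  shows "isomorphic G X"
proof -
  define idx where "idx (e :: oedge) = inv_into I (\<lambda>m. fst (x m)) (fst e)" for e
  define \<eta> where "\<eta> e = (if e = x (idx e) then y (idx e) else orev (y (idx e)))" for e
  have enum: "\<exists>m\<in>I. e = x m \<or> e = orev (x m)" if "fst e \<in> edges G" for e
    using that bij_betw_imp_surj_on[OF x] by (force simp: fst_eq_iff_orev)
  have idx: "idx (x m) = m" "idx (orev (x m)) = m" if "m \<in> I" for m
    using inv_into_f_f[OF bij_betw_imp_inj_on[OF x] that] by (simp_all add: idx_def)
  have \<eta>_x: "\<eta> (x m) = y m" "\<eta> (orev (x m)) = orev (y m)" if "m \<in> I" for m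
    using idx[OF that] by (simp_all add: \<eta>_def)
  have \<eta>_cases: "\<exists>m\<in>I. (e = x m \<and> \<eta> e = y m) \<or> (e = orev (x m) \<and> \<eta> e = orev (y m))"
    if "e \<in> oedges G" for e
    using enum[of e] that \<eta>_x by (auto simp: oedges_iff)
  have y_in: "y m \<in> oedges X" if "m \<in> I" for m
    using bij_betw_apply[OF y that] by (simp add: oedges_iff)
  have "inj_on \<eta> (oedges G)"
  proof (rule inj_onI)
    fix e e' assume "e \<in> oedges G" "e' \<in> oedges G" and eq: "\<eta> e = \<eta> e'"
    then obtain m m' where m: "m \<in> I" "(e = x m \<and> \<eta> e = y m) \<or> (e = orev (x m) \<and> \<eta> e = orev (y m))"
      and m': "m' \<in> I" "(e' = x m' \<and> \<eta> e' = y m') \<or> (e' = orev (x m') \<and> \<eta> e' = orev (y m'))"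
      using \<eta>_cases by meson
    have "fst (y m) = fst (y m')"
      using m(2) m'(2) eq by (metis fst_orev)
    then have "m = m'"
      using bij_betw_imp_inj_on[OF y] m(1) m'(1) by (auto dest: inj_onD)
    then show "e = e'"
      using m(2) m'(2) eq by auto
  qed
  moreover have "\<eta> ` oedges G = oedges X"
  proof
    show "\<eta> ` oedges G \<subseteq> oedges X"
      using \<eta>_cases y_in by fastforce
    show "oedges X \<subseteq> \<eta> ` oedges G"
    proof
      fix e assume "e \<in> oedges X"
      then obtain m where m: "m \<in> I" "e = y m \<or> e = orev (y m)"
        using bij_betw_imp_surj_on[OF y] by (force simp: oedges_iff fst_eq_iff_orev)
      have "x m \<in> oedges G"
        using bij_betw_apply[OF x m(1)] by (simp add: oedges_iff)
      then show "e \<in> \<eta> ` oedges G"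
        using m \<eta>_x[OF m(1)] by (metis image_eqI orev_in_oedges_iff)
    qed
  qed
  moreover have "\<eta> (orev e) = orev (\<eta> e)" "oinit X (\<eta> e) = \<psi> (oinit G e)"
    if "e \<in> oedges G" for e
    using \<eta>_cases[OF that] \<eta>_x ends by auto
  ultimately show ?thesis
    using isomorphicI[OF \<psi>] by (simp add: bij_betw_def)
qed

section \<open>Periodic orbits of bijections\<close>

definition funpow_period :: "('a \<Rightarrow> 'a) \<Rightarrow> 'a \<Rightarrow> nat" where
  "funpow_period f x = (LEAST p. 0 < p \<and> (f ^^ p) x = x)"

lemma funpow_returns:
  assumes f: "bij_betw f A A" and "finite A" "x \<in> A"
  shows "\<exists>p>0. (f ^^ p) x = x"
proof -
  have "(\<lambda>k. (f ^^ k) x) ` {..card A} \<subseteq> A"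
    using bij_betw_apply[OF bij_betw_funpow[OF f]] \<open>x \<in> A\<close> by blast
  then have "\<not> inj_on (\<lambda>k. (f ^^ k) x) {..card A}"
    using card_inj_on_le[OF _ _ \<open>finite A\<close>] by fastforce
  then obtain i j where "i < j" and eq: "(f ^^ i) x = (f ^^ j) x"
    unfolding inj_on_def by (metis nat_neq_iff)
  then have "(f ^^ i) ((f ^^ (j - i)) x) = (f ^^ i) x"
    by (metis funpow_add le_add_diff_inverse less_imp_le o_apply)
  moreover have "(f ^^ (j - i)) x \<in> A"
    using bij_betw_apply[OF bij_betw_funpow[OF f]] \<open>x \<in> A\<close> by blast
  ultimately have "(f ^^ (j - i)) x = x"
    using bij_betw_imp_inj_on[OF bij_betw_funpow[OF f]] \<open>x \<in> A\<close> by (blast dest: inj_onD)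
  then show ?thesis
    using \<open>i < j\<close> by (intro exI[of _ "j - i"]) simp
qed

lemma funpow_period:
  assumes "bij_betw f A A" "finite A" "x \<in> A"
  shows "0 < funpow_period f x" and "(f ^^ funpow_period f x) x = x"
  using LeastI_ex[OF funpow_returns[OF assms]] by (simp_all add: funpow_period_def)

lemma funpow_eq_iff_mod_period:
  assumes "bij_betw f A A" "finite A" "x \<in> A"
  shows "(f ^^ i) x = (f ^^ j) x \<longleftrightarrow> i mod funpow_period f x = j mod funpow_period f x"
proof -
  let ?p = "funpow_period f x"
  have "inj_on (\<lambda>k. (f ^^ k) x) {0..<?p}"
  proof (rule inj_on_funpow_least)
    show "(f ^^ ?p) x = x"
      using funpow_period[OF assms] by simp
    show "(f ^^ m) x \<noteq> x" if "0 < m" "m < ?p" for m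
      using not_less_Least[of m "\<lambda>p. 0 < p \<and> (f ^^ p) x = x"] that
      by (simp add: funpow_period_def)
  qed
  moreover have "(f ^^ k) x = (f ^^ (k mod ?p)) x" for k
    using funpow_mod_eq[OF funpow_period(2)[OF assms]] by simp
  moreover have "k mod ?p \<in> {0..<?p}" for k
    using funpow_period(1)[OF assms] by simp
  ultimately show ?thesis
    by (metis inj_on_eq_iff)
qed

lemma funpow_reaches_imp_in_orbit:
  assumes "bij_betw f A A" "finite A" "y \<in> A" "(f ^^ l) y = x"
  shows "\<exists>m. y = (f ^^ m) x"
proof -
  let ?q = "funpow_period f y"
  have "(f ^^ (l * ?q)) y = y"
    using funpow_eq_iff_mod_period[OF assms(1-3), of "l * ?q" 0] by simp
  moreover have "l \<le> l * ?q"
    using funpow_period(1)[OF assms(1-3)] by simp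
  ultimately have "(f ^^ (l * ?q - l)) x = y"
    using assms(4) by (metis funpow_add le_add_diff_inverse2 o_apply)
  then show ?thesis
    by metis
qed

lemma bij_betw_funpow_orbit:
  assumes f: "bij_betw f A A" "finite A" "x \<in> A"
    and reach: "\<And>y. y \<in> A \<Longrightarrow> \<exists>l. (f ^^ l) y = x"
  shows "bij_betw (\<lambda>m. (f ^^ m) x) {1..funpow_period f x} A"
proof -
  let ?p = "funpow_period f x"
  have p: "0 < ?p"
    using funpow_period[OF f] by simp
  have "inj_on (\<lambda>m. (f ^^ m) x) {1..?p}"
  proof (rule inj_onI)
    fix i j assume "i \<in> {1..?p}" "j \<in> {1..?p}" "(f ^^ i) x = (f ^^ j) x"
    then show "i = j"
      using funpow_eq_iff_mod_period[OF f, of i j] by (auto simp: le_less)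
  qed
  moreover have "(\<lambda>m. (f ^^ m) x) ` {1..?p} = A"
  proof
    show "(\<lambda>m. (f ^^ m) x) ` {1..?p} \<subseteq> A"
      using bij_betw_apply[OF bij_betw_funpow[OF f(1)] f(3)] by blast
    show "A \<subseteq> (\<lambda>m. (f ^^ m) x) ` {1..?p}"
    proof
      fix y assume "y \<in> A"
      then obtain m where m: "y = (f ^^ m) x"
        using reach funpow_reaches_imp_in_orbit[OF f(1,2)] by blast
      define r where "r = (if m mod ?p = 0 then ?p else m mod ?p)"
      have "r \<in> {1..?p}" "r mod ?p = m mod ?p"
        using p by (auto simp: r_def)
      moreover from this have "y = (f ^^ r) x"
        using m funpow_eq_iff_mod_period[OF f, of r m] by simp
      ultimately show "y \<in> (\<lambda>m. (f ^^ m) x) ` {1..?p}"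
        by blast
    qed
  qed
  ultimately show ?thesis
    unfolding bij_betw_def by blast
qed

section \<open>Irreducible matrices and folds\<close>

lemma mat_pow_support_closed:
  assumes "k \<in> C" and closed: "\<And>i j. i \<in> C \<Longrightarrow> i \<in> I \<Longrightarrow> 0 < A i j \<Longrightarrow> j \<in> C"
    and "0 < mat_pow I A m k j"
  shows "j \<in> C"
  using assms(3)
proof (induction m arbitrary: j)
  case 0
  then show ?case
    using \<open>k \<in> C\<close> by (simp split: if_splits)
next
  case (Suc m)
  then have "(\<Sum>i\<in>I. mat_pow I A m k i * A i j) \<noteq> 0"
    by simp
  then obtain i where "i \<in> I" "mat_pow I A m k i * A i j \<noteq> 0"
    by (rule sum.not_neutral_contains_not_neutral)
  then have "0 < mat_pow I A m k i" "0 < A i j"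
    by simp_all
  then show ?case
    using Suc.IH closed \<open>i \<in> I\<close> by blast
qed

lemma irreducible_matrix_reaches:
  assumes "irreducible_matrix I A" "a \<in> I" "k \<in> I"
    and row: "\<And>i j. i \<in> I \<Longrightarrow> i \<noteq> a \<Longrightarrow> 0 < A i j \<Longrightarrow> j = \<sigma> i"
  shows "\<exists>l. (\<sigma> ^^ l) k = a"
proof (rule ccontr)
  assume unreached: "\<nexists>l. (\<sigma> ^^ l) k = a"
  let ?C = "range (\<lambda>l. (\<sigma> ^^ l) k)"
  obtain m where m: "0 < mat_pow I A m k a"
    using assms(1-3) unfolding irreducible_matrix_def by blast
  have closed: "j \<in> ?C" if reached: "i \<in> ?C" and "i \<in> I" "0 < A i j" for i j
  proof -
    obtain l where l: "i = (\<sigma> ^^ l) k"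
      using reached by blast
    then have "i \<noteq> a"
      using unreached by blast
    then have "j = (\<sigma> ^^ Suc l) k"
      using row[OF \<open>i \<in> I\<close> _ \<open>0 < A i j\<close>] l by simp
    then show ?thesis
      by blast
  qed
  have "k \<in> ?C"
    by (rule range_eqI[of _ _ 0]) simp
  then have "a \<in> ?C"
    using closed m by (rule mat_pow_support_closed)
  then show False
    using unreached by blast
qed

lemma trans_mat_pos_singleton:
  assumes "emap f (k, True) = [y]" and "0 < trans_mat f k j"
  shows "j = fst y"
  using assms by (cases "y = (j, True)"; cases "y = (j, False)") (auto simp: trans_mat_def)

lemma oinit_set_oinit: "oinit (set_oinit G e y) x = (if x = e then y else oinit G x)"
  by (cases e; cases x) (auto simp: set_oinit_def oinit_def)

lemma single_fold_decomp_full_fold: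
  assumes "wf_graph G" "single_fold_decomp G f"
  obtains e0 e1 h where "fold_precond G e0 e1" "graph_iso (full_fold_graph G e0 e1) G h"
    "map_eq G f (gcomp h (full_fold_map e0 e1))"
proof -
  obtain H \<phi> h where fold: "is_fold G H \<phi>" and iso: "graph_iso H G h" and f: "map_eq G f (gcomp h \<phi>)"
    using assms(2) unfolding single_fold_decomp_def by blast
  obtain e0 e1 where pre: "fold_precond G e0 e1" and kinds:
    "(H = full_fold_graph G e0 e1 \<and> \<phi> = full_fold_map e0 e1) \<or>
     (H = complete_fold_graph G e0 e1 \<and> \<phi> = complete_fold_map G e0 e1) \<or>
     (\<exists>w n. w \<notin> verts G \<and> n \<notin> edges G \<and> H = partial_fold_graph G e0 e1 w n \<and>
        \<phi> = partial_fold_map e0 e1 n)"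
    using fold unfolding is_fold_def by blast
  have same_card: "card (edges H) = card (edges G)"
    using graph_iso_card[OF iso] by simp
  have fin: "finite (edges G)" and a: "fst e1 \<in> edges G"
    using assms(1) pre by (simp_all add: wf_graph_def fold_precond_def oedges_iff)
  have "H \<noteq> complete_fold_graph G e0 e1"
  proof
    assume "H = complete_fold_graph G e0 e1"
    then have "card (edges H) = card (edges G) - 1"
      using fin a by (simp add: complete_fold_graph_def)
    moreover have "0 < card (edges G)"
      using fin a card_gt_0_iff by blast
    ultimately show False
      using same_card by simp
  qed
  moreover have "H \<noteq> partial_fold_graph G e0 e1 w n" if "n \<notin> edges G" for w n
  proof
    assume "H = partial_fold_graph G e0 e1 w n"
    then have "card (edges H) = Suc (card (edges G))"
      using fin that by (simp add: partial_fold_graph_def Let_def)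
    then show False
      using same_card by simp
  qed
  ultimately show thesis
    using kinds that pre iso f by blast
qed

lemma full_fold_emap:
  assumes "map_eq G f (gcomp h (full_fold_map e0 e1))" "k \<in> edges G" "k \<noteq> fst e1"
  shows "emap f (k, True) = emap h (k, True)"
proof -
  have "(k, True) \<noteq> e1" "(k, True) \<noteq> orev e1"
    using assms(3) by (auto dest: arg_cong[where f = fst])
  then show ?thesis
    using assms(1,2) by (simp add: map_eq_def gcomp_def full_fold_map_def oedges_iff)
qed

section \<open>Roses and triangles\<close>

lemma rank_rose: "rank (rose r) = int r"
  by (simp add: rank_def rose_def polygonal_def)

lemma card_edges_delta_minus: "1 \<le> k \<Longrightarrow> card (edges (delta_minus k)) = 3 * k - 1"
  by (simp add: delta_minus_def polygonal_def)

lemma card_edges_delta_plus: "card (edges (delta_plus k)) = 3 * k + 1"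
  by (simp add: delta_plus_def polygonal_def card_Diff_subset)

lemma rank_delta_minus: "1 \<le> k \<Longrightarrow> rank (delta_minus k) = 3 * int k - 3"
  using card_edges_delta_minus by (simp add: rank_def delta_minus_def polygonal_def of_nat_diff)

lemma rank_delta_plus: "rank (delta_plus k) = 3 * int k - 1"
  using card_edges_delta_plus by (simp add: rank_def delta_plus_def polygonal_def)

lemma mult_add_eq_iff:
  fixes K :: nat
  assumes "t < K" "t' < K"
  shows "s * K + t = s' * K + t' \<longleftrightarrow> s = s' \<and> t = t'"
  by (metis assms add.commute div_mult_self1 div_less less_nat_zero_code mod_mult_self1 mod_less not_gr_zero plus_nat.add_0)

lemma polygonal_ends:
  assumes "t < k"
  shows "src (polygonal s k) (i * k + t) = i" and "tgt (polygonal s k) (i * k + t) = (i + 1) mod s"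
  using assms by (simp_all add: polygonal_def)

text \<open>
  The edge \<open>e\<^sub>i\<^sup>j\<close> of \<open>P\<^sub>3\<^sub>,\<^sub>K\<close> is encoded as \<open>i * K + (j - 1)\<close>; \<open>tri_label d K\<close>
  enumerates these edges going round the triangle, one edge per side in each round.
\<close>

definition tri_label :: "nat \<Rightarrow> nat \<Rightarrow> nat \<Rightarrow> nat" where
  "tri_label d K m = ((m + d) mod 3) * K + (m - 1) div 3"

lemma tri_label_depth_less: "m \<in> {1..3 * K} \<Longrightarrow> (m - 1) div 3 < (K :: nat)"
  by auto

lemma tri_label_less:
  assumes "m \<in> {1..3 * K}"
  shows "tri_label d K m < 3 * K"
proof -
  have "s * K + t < 3 * K" if "s \<le> 2" "t < K" for s t :: nat
    using mult_le_mono1[OF that(1), of K] that(2) by linarith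
  then show ?thesis
    using tri_label_depth_less[OF assms] by (simp add: tri_label_def)
qed

lemma tri_label_eq_iff:
  assumes "m \<in> {1..3 * K}" "t < K"
  shows "tri_label d K m = s * K + t \<longleftrightarrow> (m + d) mod 3 = s \<and> (m - 1) div 3 = t"
  unfolding tri_label_def by (rule mult_add_eq_iff[OF tri_label_depth_less[OF assms(1)] assms(2)])

lemma inj_on_tri_label: "inj_on (tri_label d K) {1..3 * K}"
proof (rule inj_onI)
  fix m m' assume m: "m \<in> {1..3 * K}" and m': "m' \<in> {1..3 * K}"
    and eq: "tri_label d K m = tri_label d K m'"
  have "(m - 1) div 3 < K" "(m' - 1) div 3 < K"
    using tri_label_depth_less[OF m] tri_label_depth_less[OF m'] .
  then have side: "(m + d) mod 3 = (m' + d) mod 3" and depth: "(m - 1) div 3 = (m' - 1) div 3"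
    using eq by (simp_all add: tri_label_def mult_add_eq_iff)
  have "(k - 1) mod 3 = ((k + d) mod 3 + 2 * d + 2) mod 3" if "1 \<le> k" for k :: nat
  proof -
    have "(k + d) + (2 * d + 2) = (k - 1) + 3 * (d + 1)"
      using that by simp
    then show ?thesis
      by (metis mod_add_left_eq mod_mult_self2 add.assoc)
  qed
  then have "(m - 1) mod 3 = (m' - 1) mod 3"
    using m m' side by simp
  then have "m - 1 = m' - 1"
    using depth by (metis div_mult_mod_eq)
  then show "m = m'"
    using m m' by (simp add: eq_diff_iff)
qed

lemma tri_label_ends:
  assumes "m \<in> {1..3 * K}"
  shows "src (polygonal 3 K) (tri_label d K m) = (m + d) mod 3"
    and "tgt (polygonal 3 K) (tri_label d K m) = (m + d + 1) mod 3"
  using polygonal_ends[OF tri_label_depth_less[OF assms], of 3 "(m + d) mod 3"]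
  by (simp_all add: tri_label_def mod_Suc_eq)

lemma delta_plus_tri_label_bij:
  "bij_betw (tri_label 1 (q + 1)) {1..3 * q + 1} (edges (delta_plus q))"
proof -
  have sub: "{1..3 * q + 1} \<subseteq> {1..3 * (q + 1)}"
    by auto
  have inj: "inj_on (tri_label 1 (q + 1)) {1..3 * q + 1}"
    using inj_on_subset[OF inj_on_tri_label sub] .
  have "tri_label 1 (q + 1) m \<in> edges (delta_plus q)" if m: "m \<in> {1..3 * q + 1}" for m
  proof -
    have m': "m \<in> {1..3 * (q + 1)}"
      using m sub by blast
    have "(m - 1) div 3 = q \<Longrightarrow> (m + 1) mod 3 = 2"
      using m by simp presburger
    then have off_top: "tri_label 1 (q + 1) m \<noteq> s * (q + 1) + q" if "s < 2" for s
      using tri_label_eq_iff[OF m', of q 1 s] that by auto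
    show ?thesis
      using off_top[of 0] off_top[of 1] tri_label_less[OF m', of 1]
      by (simp add: delta_plus_def polygonal_def)
  qed
  then have "tri_label 1 (q + 1) ` {1..3 * q + 1} = edges (delta_plus q)"
    using card_edges_delta_plus card_image[OF inj]
    by (intro card_subset_eq) (auto simp: delta_plus_def polygonal_def)
  then show ?thesis
    using inj by (simp add: bij_betw_def)
qed

lemma delta_minus_tri_label_bij:
  assumes "1 \<le> k"
  shows "bij_betw (tri_label 0 k) {1..3 * k - 1} (edges (delta_minus k))"
proof -
  have sub: "{1..3 * k - 1} \<subseteq> {1..3 * k}"
    by auto
  have inj: "inj_on (tri_label 0 k) {1..3 * k - 1}"
    using inj_on_subset[OF inj_on_tri_label sub] .
  have "tri_label 0 k m \<in> edges (delta_minus k)" if m: "m \<in> {1..3 * k - 1}" for m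
  proof -
    have m': "m \<in> {1..3 * k}"
      using m sub by blast
    have "(m - 1) div 3 = k - 1 \<Longrightarrow> m mod 3 \<noteq> 0"
      using m assms by simp presburger
    then have "tri_label 0 k m \<noteq> 0 * k + (k - 1)"
      using tri_label_eq_iff[OF m', of "k - 1" 0 0] assms by auto
    then show ?thesis
      using tri_label_less[OF m', of 0] by (simp add: delta_minus_def polygonal_def)
  qed
  then have "tri_label 0 k ` {1..3 * k - 1} = edges (delta_minus k)"
    using card_edges_delta_minus[OF assms] card_image[OF inj]
    by (intro card_subset_eq) (auto simp: delta_minus_def polygonal_def)
  then show ?thesis
    using inj by (simp add: bij_betw_def)
qed

section \<open>Graphs with an isomorphism from a full fold\<close>

lemma dvd_offset_combination:
  fixes d k k' c n :: int
  assumes k: "d dvd k - k'" and kc: "d dvd k + c \<or> d dvd k - c"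
    and "(k' = n \<and> d dvd n) \<or> (k' = n + c \<and> d dvd n - c)"
  shows "d dvd 3 * c" and "d dvd c \<or> d dvd n - c"
proof -
  have "d dvd c \<or> d dvd 3 * c \<and> d dvd n - c"
    using assms(3)
  proof (elim disjE conjE)
    assume "k' = n" "d dvd n"
    then have "d dvd k"
      using dvd_add[OF k \<open>d dvd n\<close>] by simp
    from kc show ?thesis
    proof
      assume "d dvd k + c"
      then have "d dvd (k + c) - k"
        using \<open>d dvd k\<close> by (rule dvd_diff)
      then show ?thesis
        by simp
    next
      assume "d dvd k - c"
      with \<open>d dvd k\<close> have "d dvd k - (k - c)"
        by (rule dvd_diff)
      then show ?thesis
        by simp
    qed
  next
    assume "k' = n + c" "d dvd n - c"
    from kc show ?thesis
    proof
      assume "d dvd k + c"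
      then have "d dvd (k + c) - (k - k') - (n - c)"
        using k \<open>d dvd n - c\<close> by (intro dvd_diff[OF dvd_diff])
      then show ?thesis
        using \<open>k' = n + c\<close> \<open>d dvd n - c\<close> by (simp add: algebra_simps)
    next
      assume "d dvd k - c"
      then have "d dvd (k - c) - (k - k') - (n - c)"
        using k \<open>d dvd n - c\<close> by (intro dvd_diff[OF dvd_diff])
      then show ?thesis
        using \<open>k' = n + c\<close> by (simp add: algebra_simps)
    qed
  qed
  then show "d dvd 3 * c" "d dvd c \<or> d dvd n - c"
    by auto
qed

definition edge_perm :: "(oedge \<Rightarrow> oedge) \<Rightarrow> nat \<Rightarrow> nat" where
  "edge_perm \<tau> i = fst (\<tau> (i, True))"

text \<open>
  \<open>\<tau>\<close> and \<open>\<beta>\<close> are the actions on oriented edges and on vertices of an isomorphism from the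
  full fold of \<open>e\<^sub>1\<close> over \<open>e\<^sub>0\<close> (in which \<open>e\<^sub>1\<close> starts at the end of \<open>e\<^sub>0\<close>) onto \<open>G\<close>;
  \<open>reaches\<close> is what irreducibility of the transition matrix yields.
\<close>

locale full_fold_iso =
  fixes G :: graph and e0 e1 :: oedge and \<tau> :: "oedge \<Rightarrow> oedge" and \<beta> :: "nat \<Rightarrow> nat"
  assumes wf: "wf_graph G"
    and connected: "connected_graph G"
    and valence: "\<And>y. y \<in> verts G \<Longrightarrow> 3 \<le> valence G y"
    and fold: "fold_precond G e0 e1"
    and tau_bij: "bij_betw \<tau> (oedges G) (oedges G)"
    and tau_orev: "\<And>x. x \<in> oedges G \<Longrightarrow> \<tau> (orev x) = orev (\<tau> x)"
    and beta_bij: "bij_betw \<beta> (verts G) (verts G)"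
    and oinit_tau: "\<And>x. x \<in> oedges G \<Longrightarrow>
          oinit G (\<tau> x) = \<beta> (if x = e1 then oterm G e0 else oinit G x)"
    and reaches: "\<And>i. i \<in> edges G \<Longrightarrow> \<exists>l. (edge_perm \<tau> ^^ l) i = fst e1"
begin

abbreviation "\<sigma> \<equiv> edge_perm \<tau>"
abbreviation "a \<equiv> fst e1"
abbreviation "u \<equiv> oterm G e0"
abbreviation "v \<equiv> oinit G e0"
abbreviation "w \<equiv> oterm G e1"

definition orb :: "nat \<Rightarrow> oedge" where
  "orb m = (\<tau> ^^ m) e1"

definition n :: nat where
  "n = funpow_period \<sigma> a"

definition B :: "nat \<Rightarrow> nat" where
  "B k = (\<beta> ^^ k) u"

definition p :: nat where
  "p = funpow_period \<beta> u"

lemma finite_verts: "finite (verts G)" and finite_edges: "finite (edges G)"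
  using wf by (simp_all add: wf_graph_def)

lemma e0_in: "e0 \<in> oedges G" and e1_in: "e1 \<in> oedges G" and a_in: "a \<in> edges G"
  and oinit_e1: "oinit G e1 = v"
  using fold by (auto simp: fold_precond_def oedges_iff)

lemma oterm_tau:
  assumes "x \<in> oedges G"
  shows "oterm G (\<tau> x) = \<beta> (if x = orev e1 then u else oterm G x)"
  using oinit_tau[of "orev x"] tau_orev[OF assms] assms by (auto simp flip: oinit_orev)

lemma fst_tau:
  assumes "x \<in> oedges G"
  shows "fst (\<tau> x) = \<sigma> (fst x)"
proof (cases "snd x")
  case True
  then have "x = (fst x, True)"
    by (simp add: prod_eq_iff)
  then show ?thesis
    by (metis edge_perm_def)
next
  case False
  then have "x = orev (fst x, True)"
    by (simp add: orev_def prod_eq_iff)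
  then show ?thesis
    using tau_orev[of "(fst x, True)"] assms by (metis edge_perm_def fst_orev orev_in_oedges_iff)
qed

lemma sigma_bij: "bij_betw \<sigma> (edges G) (edges G)"
proof -
  have edges_eq: "edges G = fst ` oedges G"
    by (force simp: oedges_def)
  have "\<sigma> ` edges G = fst ` \<tau> ` oedges G"
    unfolding edges_eq image_image using fst_tau by (auto intro!: image_cong)
  then have "\<sigma> ` edges G = edges G"
    using bij_betw_imp_surj_on[OF tau_bij] edges_eq by simp
  then show ?thesis
    using finite_surj_inj[OF finite_edges] by (simp add: bij_betw_def)
qed

lemma orb_in: "orb m \<in> oedges G"
  using bij_betw_apply[OF bij_betw_funpow[OF tau_bij] e1_in] by (simp add: orb_def)

lemma fst_orb: "fst (orb m) = (\<sigma> ^^ m) a"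
proof (induction m)
  case (Suc m)
  then show ?case
    using fst_tau[OF orb_in[of m]] by (simp add: orb_def)
qed (simp add: orb_def)

lemma n_pos: "0 < n"
  using funpow_period(1)[OF sigma_bij finite_edges a_in] by (simp add: n_def)

lemma orb_bij: "bij_betw (\<lambda>m. fst (orb m)) {1..n} (edges G)"
  unfolding fst_orb n_def using bij_betw_funpow_orbit[OF sigma_bij finite_edges a_in reaches] .

lemma card_edges: "card (edges G) = n"
  using bij_betw_same_card[OF orb_bij] by simp

lemma oedge_cases:
  assumes "x \<in> oedges G"
  obtains m where "m \<in> {1..n}" "x = orb m \<or> x = orev (orb m)"
  using bij_betw_imp_surj_on[OF orb_bij] assms by (force simp: oedges_iff fst_eq_iff_orev)

lemma orb_n: "orb n = e1 \<or> orb n = orev e1"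
  using funpow_period(2)[OF sigma_bij finite_edges a_in] fst_orb[of n]
  by (simp add: n_def fst_eq_iff_orev eq_commute)

lemma orb_ne_e1:
  assumes "0 < m" "m < n"
  shows "orb m \<noteq> e1" "orb m \<noteq> orev e1"
proof -
  have "(\<sigma> ^^ m) a \<noteq> (\<sigma> ^^ 0) a"
    using assms funpow_eq_iff_mod_period[OF sigma_bij finite_edges a_in, of m 0] by (simp add: n_def)
  then show "orb m \<noteq> e1" "orb m \<noteq> orev e1"
    using fst_orb[of m] by auto
qed

lemma u_in: "u \<in> verts G"
  using oterm_in_verts[OF wf e0_in] .

lemma B_in: "B k \<in> verts G"
  using bij_betw_apply[OF bij_betw_funpow[OF beta_bij] u_in] by (simp add: B_def)

lemma B_0: "B 0 = u"
  by (simp add: B_def)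

lemma B_eq_iff: "B i = B j \<longleftrightarrow> i mod p = j mod p"
  unfolding B_def p_def by (rule funpow_eq_iff_mod_period[OF beta_bij finite_verts u_in])

lemma B_eq_iff_dvd: "B i = B j \<longleftrightarrow> int p dvd int i - int j"
  unfolding B_eq_iff by (metis mod_eq_dvd_iff of_nat_eq_iff zmod_int)

lemma funpow_beta_B: "(\<beta> ^^ k) (B j) = B (k + j)"
  by (simp add: B_def funpow_add)

lemma orb_ends_beta:
  assumes "m \<in> {1..n}"
  shows "oinit G (orb m) = B m \<and> oterm G (orb m) = (\<beta> ^^ m) w"
  using assms
proof (induction m)
  case (Suc m)
  show ?case
  proof (cases "m = 0")
    case True
    then show ?thesis
      using oinit_tau[OF e1_in] oterm_tau[OF e1_in] by (simp add: orb_def B_def)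
  next
    case False
    then have "orb m \<noteq> e1" "orb m \<noteq> orev e1"
      using orb_ne_e1[of m] Suc.prems by auto
    moreover have "oinit G (orb m) = B m" "oterm G (orb m) = (\<beta> ^^ m) w"
      using Suc False by auto
    ultimately show ?thesis
      using oinit_tau[OF orb_in] oterm_tau[OF orb_in] by (simp add: orb_def B_def)
  qed
qed simp

lemma w_in_B_orbit: "\<exists>k. w = B k"
proof -
  obtain j where j: "j \<in> {1..n}" "e0 = orb j \<or> e0 = orev (orb j)"
    using oedge_cases[OF e0_in] by blast
  have n: "n \<in> {1..n}"
    using n_pos by simp
  have "\<exists>i l. (\<beta> ^^ l) w = B i"
  proof (cases "e0 = orb j")
    case True
    then have "(\<beta> ^^ j) w = B 0"
      using orb_ends_beta[OF j(1)] B_0 by simp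
    then show ?thesis
      by blast
  next
    case False
    then have v: "v = (\<beta> ^^ j) w"
      using j(2) orb_ends_beta[OF j(1)] by auto
    from orb_n show ?thesis
    proof
      assume "orb n = e1"
      then have "(\<beta> ^^ j) w = B n"
        using orb_ends_beta[OF n] oinit_e1 v by simp
      then show ?thesis
        by blast
    next
      assume "orb n = orev e1"
      then have "(\<beta> ^^ 0) w = B n"
        using orb_ends_beta[OF n] by simp
      then show ?thesis
        by blast
    qed
  qed
  then obtain i l where "(\<beta> ^^ l) w = B i"
    by blast
  then obtain m where "w = (\<beta> ^^ m) (B i)"
    using funpow_reaches_imp_in_orbit[OF beta_bij finite_verts oterm_in_verts[OF wf e1_in]] by blast
  then show ?thesis
    using funpow_beta_B by metis
qed

definition c :: nat where
  "c = (SOME c. w = B c)"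

lemma w_eq: "w = B c"
  unfolding c_def using someI_ex[OF w_in_B_orbit] .

lemma orb_ends:
  assumes "m \<in> {1..n}"
  shows "oinit G (orb m) = B m" and "oterm G (orb m) = B (m + c)"
  using orb_ends_beta[OF assms] w_eq funpow_beta_B by simp_all

lemma oedge_ends:
  assumes "x \<in> oedges G"
  obtains m where "oinit G x = B m \<and> oterm G x = B (m + c) \<or> oinit G x = B (m + c) \<and> oterm G x = B m"
  using oedge_cases[OF assms] orb_ends by (metis oinit_orev oterm_orev)

lemma verts_B:
  assumes "y \<in> verts G"
  obtains k where "y = B k"
proof -
  have "card {x \<in> oedges G. oinit G x = y} \<noteq> 0"
    using valence[OF assms] by (simp add: valence_def)
  then have "{x \<in> oedges G. oinit G x = y} \<noteq> {}"
    by (metis card.empty)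
  then obtain x where "x \<in> oedges G" "oinit G x = y"
    by blast
  then show thesis
    using oedge_ends that by metis
qed

lemma p_pos: "0 < p"
  using funpow_period(1)[OF beta_bij finite_verts u_in] by (simp add: p_def)

lemma coprime_c_p: "coprime c p"
proof -
  define d where "d = gcd c p"
  have "d dvd p" "d dvd c"
    by (simp_all add: d_def)
  \<comment> \<open>divisibility of the label by \<open>d\<close> does not change along an edge\<close>
  define P where "P y \<longleftrightarrow> (\<exists>k. y = B k \<and> d dvd k)" for y
  have P_B: "P (B m) \<longleftrightarrow> d dvd m" for m
  proof
    assume "P (B m)"
    then obtain k where "B m = B k" "d dvd k"
      unfolding P_def by blast
    then have "m mod p mod d = k mod p mod d"
      using B_eq_iff by simp
    then have "m mod d = k mod d"
      unfolding mod_mod_cancel[OF \<open>d dvd p\<close>] .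
    then show "d dvd m"
      using \<open>d dvd k\<close> by (metis mod_eq_0_iff_dvd)
  next
    assume "d dvd m"
    then show "P (B m)"
      unfolding P_def by blast
  qed
  have "P (oinit G x) \<longleftrightarrow> P (oterm G x)" if x: "x \<in> oedges G" for x
  proof -
    obtain m where "oinit G x = B m \<and> oterm G x = B (m + c) \<or> oinit G x = B (m + c) \<and> oterm G x = B m"
      using oedge_ends[OF x] by blast
    moreover have "d dvd m + c \<longleftrightarrow> d dvd m"
      using \<open>d dvd c\<close> by (rule dvd_add_left_iff)
    ultimately show ?thesis
      using P_B[of m] P_B[of "m + c"] by (elim disjE conjE) simp_all
  qed
  moreover have "P (B 0)"
    using P_B by simp
  ultimately have "P (B 1)"
    by (rule connected_graph_invariant[OF connected _ B_in _ B_in])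
  then show ?thesis
    using P_B by (simp add: d_def coprime_iff_gcd_eq_1)
qed

text \<open>
  The common initial vertex \<open>v\<close> of \<open>e\<^sub>0\<close> and \<open>e\<^sub>1\<close> is located twice: \<open>e\<^sub>0 = \<plusminus>orb j\<close>
  ends at \<open>u = B 0\<close>, and \<open>e\<^sub>1 = \<plusminus>orb n\<close> ends at \<open>w = B c\<close>.
\<close>

lemma v_offset_e0: "\<exists>k. v = B k \<and> (int p dvd int k + int c \<or> int p dvd int k - int c)"
proof -
  obtain j where j: "j \<in> {1..n}" "e0 = orb j \<or> e0 = orev (orb j)"
    using oedge_cases[OF e0_in] by blast
  from j(2) show ?thesis
  proof
    assume "e0 = orb j"
    then have "v = B j" "B (j + c) = B 0"
      using orb_ends[OF j(1)] B_0 by simp_all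
    then show ?thesis
      using B_eq_iff_dvd[of "j + c" 0] by auto
  next
    assume "e0 = orev (orb j)"
    then have "v = B (j + c)" "B j = B 0"
      using orb_ends[OF j(1)] B_0 by simp_all
    then show ?thesis
      using B_eq_iff_dvd[of j 0] by (intro exI[of _ "j + c"]) simp
  qed
qed

lemma v_offset_e1: "(v = B n \<and> int p dvd int n) \<or> (v = B (n + c) \<and> int p dvd int n - int c)"
proof -
  have n: "n \<in> {1..n}"
    using n_pos by simp
  from orb_n show ?thesis
  proof
    assume "orb n = e1"
    then have "v = B n" "B (n + c) = B c"
      using orb_ends[OF n] oinit_e1 w_eq by simp_all
    then show ?thesis
      using B_eq_iff_dvd by auto
  next
    assume "orb n = orev e1"
    then have "v = B (n + c)" "B n = B c"
      using orb_ends[OF n] oinit_e1 w_eq by simp_all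
    then show ?thesis
      using B_eq_iff_dvd by auto
  qed
qed

lemma period_cases: "p = 1 \<or> p = 3 \<and> c mod 3 \<noteq> 0 \<and> n mod 3 = c mod 3"
proof -
  obtain k where k: "v = B k" "int p dvd int k + int c \<or> int p dvd int k - int c"
    using v_offset_e0 by blast
  obtain k' where k': "v = B k'"
    "(int k' = int n \<and> int p dvd int n) \<or> (int k' = int n + int c \<and> int p dvd int n - int c)"
    using v_offset_e1 by auto
  have "B k = B k'"
    using k(1) k'(1) by simp
  then have "int p dvd int k - int k'"
    using B_eq_iff_dvd by blast
  note offsets = dvd_offset_combination[OF this k(2) k'(2)]
  have "p dvd 3 * c"
    using offsets(1) by (metis of_nat_dvd_iff of_nat_mult of_nat_numeral)
  then have "p dvd 3"
    using coprime_c_p by (simp add: coprime_commute coprime_dvd_mult_left_iff)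
  moreover have "p \<le> 3"
    using \<open>p dvd 3\<close> by (rule dvd_imp_le) simp
  then have "p = 1 \<or> p = 2 \<or> p = 3"
    using p_pos by presburger
  then have "p = 1 \<or> p = 3"
    using \<open>p dvd 3\<close> by auto
  moreover have "c mod 3 \<noteq> 0 \<and> n mod 3 = c mod 3" if p3: "p = 3"
  proof -
    have "\<not> p dvd c"
      using coprime_common_divisor_nat[OF coprime_c_p _ dvd_refl] p3 by auto
    then have "\<not> int p dvd int c"
      by simp
    then have "B n = B c"
      using offsets(2) B_eq_iff_dvd by blast
    then show ?thesis
      using \<open>\<not> p dvd c\<close> B_eq_iff[of n c] p3 by (simp add: dvd_eq_mod_eq_0)
  qed
  ultimately show ?thesis
    by blast
qed

lemma rose_case:
  assumes "p = 1"
  shows "isomorphic G (rose n)"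
proof (rule isomorphicI_edge_enum[OF _ orb_bij])
  have "verts G = {u}"
  proof
    show "verts G \<subseteq> {u}"
      using verts_B B_eq_iff[of _ 0] B_0 assms by (metis mod_by_1 singletonI subsetI)
  qed (simp add: u_in)
  then show "bij_betw (\<lambda>_. 0) (verts G) (verts (rose n))"
    by (simp add: bij_betw_def rose_def polygonal_def)
  show "bij_betw (\<lambda>m. fst (m - 1, True)) {1..n} (edges (rose n))"
    by (rule bij_betw_byWitness[where f' = Suc]) (auto simp: rose_def polygonal_def)
  show "oinit (rose n) (m - 1, True) = 0 \<and> oterm (rose n) (m - 1, True) = 0" if "m \<in> {1..n}" for m
    using that by (auto simp: rose_def polygonal_def div_eq_0_iff)
qed

lemma triangle_B_mod:
  assumes "p = 3"
  shows "B k = B ((k + 1) mod 3 + 2)"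
proof -
  have "((k + 1) mod 3 + 2) mod 3 = (k + 1 + 2) mod 3"
    by (rule mod_add_left_eq)
  then show ?thesis
    using assms by (simp add: B_eq_iff)
qed

lemma triangle_vertex_bij:
  assumes "p = 3"
  shows "bij_betw (\<lambda>i. B (i + 2)) {0..<3} (verts G)"
proof -
  have "inj_on (\<lambda>i. B (i + 2)) {0..<3}"
  proof (rule inj_onI)
    fix i j assume "i \<in> {0..<3}" "j \<in> {0..<3}" "B (i + 2) = B (j + 2)"
    then have "i \<in> {0, 1, 2}" "j \<in> {0, 1, 2}" "(i + 2) mod 3 = (j + 2) mod 3"
      using assms B_eq_iff by auto
    then show "i = j"
      by auto
  qed
  moreover have "verts G \<subseteq> (\<lambda>i. B (i + 2)) ` {0..<3}"
  proof
    fix y assume "y \<in> verts G"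
    then obtain k where "y = B k"
      by (rule verts_B)
    then have "y = B ((k + 1) mod 3 + 2)"
      using triangle_B_mod[OF assms] by simp
    then show "y \<in> (\<lambda>i. B (i + 2)) ` {0..<3}"
      by force
  qed
  ultimately show ?thesis
    using B_in by (auto simp: bij_betw_def)
qed

lemma triangle_edges_ge_5:
  assumes "p = 3"
  shows "5 \<le> n"
proof -
  have "card (verts G) * 3 \<le> (\<Sum>y\<in>verts G. valence G y)"
    using sum_bounded_below[of "verts G" 3 "valence G"] valence by simp
  moreover have "card (verts G) = 3"
    using bij_betw_same_card[OF triangle_vertex_bij[OF assms]] by simp
  ultimately show ?thesis
    using sum_valence[OF wf] card_edges by simp
qed

lemma triangle_iso:
  assumes "p = 3" and "verts X = {0..<3}" and y: "bij_betw (\<lambda>m. fst (y m)) {1..n} (edges X)"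
    and ends: "\<And>m. m \<in> {1..n} \<Longrightarrow>
      oinit X (y m) = (m + 1) mod 3 \<and> oterm X (y m) = (m + 1 + c mod 3) mod 3"
  shows "isomorphic G X"
proof (rule isomorphicI_edge_enum[OF _ orb_bij y])
  let ?\<psi> = "inv_into {0..<3} (\<lambda>i. B (i + 2))"
  show "bij_betw ?\<psi> (verts G) (verts X)"
    using bij_betw_inv_into[OF triangle_vertex_bij[OF assms(1)]] assms(2) by simp
  have "?\<psi> (B k) = (k + 1) mod 3" for k
  proof -
    have "B k = B ((k + 1) mod 3 + 2)"
      using triangle_B_mod[OF assms(1)] .
    then show ?thesis
      using inv_into_f_f[OF bij_betw_imp_inj_on[OF triangle_vertex_bij[OF assms(1)]]] by simp
  qed
  moreover have "(m + 1 + c) mod 3 = (m + 1 + c mod 3) mod 3" for m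
    by (rule mod_add_right_eq[symmetric])
  ultimately show "oinit X (y m) = ?\<psi> (oinit G (orb m)) \<and> oterm X (y m) = ?\<psi> (oterm G (orb m))"
    if "m \<in> {1..n}" for m
    using ends[OF that] orb_ends[OF that] by simp
qed

lemma delta_plus_case:
  assumes "p = 3" "c mod 3 = 1" "n mod 3 = 1"
  shows "\<exists>q\<ge>2. isomorphic G (delta_plus q)"
proof (intro exI conjI)
  define q where "q = n div 3"
  have n: "n = 3 * q + 1"
    using div_mult_mod_eq[of n 3] assms(3) unfolding q_def by linarith
  then show "2 \<le> q"
    using triangle_edges_ge_5[OF assms(1)] by simp
  show "isomorphic G (delta_plus q)"
  proof (rule triangle_iso[OF assms(1)])
    show "verts (delta_plus q) = {0..<3}"
      by (simp add: delta_plus_def polygonal_def)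
    show "bij_betw (\<lambda>m. fst (tri_label 1 (q + 1) m, True)) {1..n} (edges (delta_plus q))"
      using delta_plus_tri_label_bij[of q] n by simp
    show "oinit (delta_plus q) (tri_label 1 (q + 1) m, True) = (m + 1) mod 3 \<and>
        oterm (delta_plus q) (tri_label 1 (q + 1) m, True) = (m + 1 + c mod 3) mod 3"
      if "m \<in> {1..n}" for m
    proof -
      have "m \<in> {1..3 * (q + 1)}"
        using that n by simp
      then show ?thesis
        using tri_label_ends[of m "q + 1" 1] assms(2) by (simp add: delta_plus_def)
    qed
  qed
qed

lemma delta_minus_case:
  assumes "p = 3" "c mod 3 = 2" "n mod 3 = 2"
  shows "\<exists>k\<ge>2. isomorphic G (delta_minus k)"
proof (intro exI conjI)
  define k where "k = n div 3 + 1"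
  have "n = 3 * (n div 3) + 2"
    using div_mult_mod_eq[of n 3] assms(3) by linarith
  then have n: "n = 3 * k - 1"
    by (simp add: k_def)
  then show "2 \<le> k"
    using triangle_edges_ge_5[OF assms(1)] by simp
  show "isomorphic G (delta_minus k)"
  proof (rule triangle_iso[OF assms(1)])
    show "verts (delta_minus k) = {0..<3}"
      by (simp add: delta_minus_def polygonal_def)
    show "bij_betw (\<lambda>m. fst (tri_label 0 k m, False)) {1..n} (edges (delta_minus k))"
      using delta_minus_tri_label_bij[of k] n \<open>2 \<le> k\<close> by simp
    show "oinit (delta_minus k) (tri_label 0 k m, False) = (m + 1) mod 3 \<and>
        oterm (delta_minus k) (tri_label 0 k m, False) = (m + 1 + c mod 3) mod 3"
      if "m \<in> {1..n}" for m
    proof -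
      have "m \<in> {1..3 * k}"
        using that n by auto
      then show ?thesis
        using tri_label_ends[of m k 0] assms(2) by (simp add: delta_minus_def)
    qed
  qed
qed

theorem classification:
  "isomorphic G (rose n) \<or> (\<exists>k\<ge>2. isomorphic G (delta_minus k)) \<or> (\<exists>k\<ge>2. isomorphic G (delta_plus k))"
proof -
  have "c mod 3 = 1 \<or> c mod 3 = 2" if "c mod 3 \<noteq> 0"
    using that mod_less_divisor[of 3 c] by arith
  then show ?thesis
    using period_cases rose_case delta_plus_case delta_minus_case by metis
qed

end

lemma single_fold_decomp_full_fold_iso:
  assumes wf: "wf_graph G" and "connected_graph G" and irr: "irreducible_map G f"
    and "single_fold_decomp G f"
  obtains e0 e1 \<tau> \<beta> where "full_fold_iso G e0 e1 \<tau> \<beta>"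
proof -
  obtain e0 e1 h where pre: "fold_precond G e0 e1" and iso: "graph_iso (full_fold_graph G e0 e1) G h"
    and f: "map_eq G f (gcomp h (full_fold_map e0 e1))"
    using single_fold_decomp_full_fold[OF wf \<open>single_fold_decomp G f\<close>] by blast
  let ?H = "full_fold_graph G e0 e1"
  define \<tau> where "\<tau> x = hd (emap h x)" for x
  have H: "verts ?H = verts G" "oedges ?H = oedges G"
    "oinit ?H x = (if x = e1 then oterm G e0 else oinit G x)" for x
    by (simp_all add: full_fold_graph_def oedges_def set_oinit_def oinit_set_oinit[unfolded set_oinit_def])
  have gm: "graph_map ?H G h"
    using iso by (simp add: graph_iso_def)
  have emap_h: "emap h x = [\<tau> x]" if "x \<in> oedges G" for x
    using graph_iso_emap[OF iso] that H(2) by (simp add: \<tau>_def)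
  have tau_bij: "bij_betw \<tau> (oedges G) (oedges G)"
    using iso H(2) by (simp add: graph_iso_def \<tau>_def[abs_def])
  have "full_fold_iso G e0 e1 \<tau> (vmap h)"
  proof
    show "wf_graph G" "connected_graph G" "fold_precond G e0 e1" "bij_betw \<tau> (oedges G) (oedges G)"
      by fact+
    show "3 \<le> valence G y" if "y \<in> verts G" for y
      using irr that by (simp add: irreducible_map_def)
    show "bij_betw (vmap h) (verts G) (verts G)"
      using iso H(1) by (simp add: graph_iso_def)
    show "\<tau> (orev x) = orev (\<tau> x)" if "x \<in> oedges G" for x
      using gm that H(2) emap_h[OF that] emap_h[of "orev x"]
      by (simp add: graph_map_def rev_path_def)
    show "oinit G (\<tau> x) = vmap h (if x = e1 then oterm G e0 else oinit G x)" if "x \<in> oedges G" for x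
    proof -
      have "oinit G (hd (emap h x)) = vmap h (oinit ?H x)"
        using gm that H(2) unfolding graph_map_def by blast
      then show ?thesis
        using H(3) emap_h[OF that] by simp
    qed
    show "\<exists>l. (edge_perm \<tau> ^^ l) i = fst e1" if "i \<in> edges G" for i
    proof (rule irreducible_matrix_reaches[where A = "trans_mat f"])
      show "irreducible_matrix (edges G) (trans_mat f)"
        using irr by (simp add: irreducible_map_def)
      show "fst e1 \<in> edges G" "i \<in> edges G"
        using pre that by (simp_all add: fold_precond_def oedges_iff)
      show "j = edge_perm \<tau> k" if "k \<in> edges G" "k \<noteq> fst e1" "0 < trans_mat f k j" for k j
      proof -
        have "emap f (k, True) = [\<tau> (k, True)]"
          using full_fold_emap[OF f that(1,2)] emap_h[of "(k, True)"] that(1) by (simp add: oedges_iff)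
        then show ?thesis
          using trans_mat_pos_singleton that(3) by (simp add: edge_perm_def)
      qed
    qed
  qed
  then show thesis
    by (rule that)
qed

theorem single_fold_classification:
  assumes "wf_graph G" "connected_graph G" "irreducible_map G f" "single_fold_decomp G f"
  shows "(\<exists>r. isomorphic G (rose r)) \<or> (\<exists>k\<ge>2. isomorphic G (delta_minus k)) \<or>
    (\<exists>k\<ge>2. isomorphic G (delta_plus k))"
proof -
  obtain e0 e1 \<tau> \<beta> where "full_fold_iso G e0 e1 \<tau> \<beta>"
    using single_fold_decomp_full_fold_iso[OF assms] .
  then show ?thesis
    using full_fold_iso.classification by blast
qed

theorem theoremC:
  fixes G :: graph and f :: gmap and r :: nat
  assumes "wf_graph G" and "connected_graph G" and "rank G = int r"
    and "graph_map G G f" and "irreducible_map G f"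
    and "homotopy_equivalence G G f"
    and "single_fold_decomp G f"
  shows "(isomorphic G (rose r) \<or>
          (\<exists>k\<ge>2. isomorphic G (delta_minus k) \<or> isomorphic G (delta_plus k)))
       \<and> (r mod 3 = 0 \<longrightarrow> isomorphic G (rose r) \<or>
            (\<exists>k\<ge>2. 3 * k - 3 = r \<and> isomorphic G (delta_minus k)))
       \<and> (r mod 3 = 1 \<longrightarrow> isomorphic G (rose r))
       \<and> (r mod 3 = 2 \<longrightarrow> isomorphic G (rose r) \<or>
            (\<exists>k\<ge>2. 3 * k - 1 = r \<and> isomorphic G (delta_plus k)))"
  using single_fold_classification[OF assms(1,2,5,7)]
proof (elim disjE exE conjE)
  fix N assume iso: "isomorphic G (rose N)"
  then have "N = r"
    using isomorphic_rank[OF iso] rank_rose assms(3) by simp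
  then show ?thesis
    using iso by simp
next
  fix k assume "2 \<le> k" and iso: "isomorphic G (delta_minus k)"
  then have "3 * int k - 3 = int r"
    using isomorphic_rank[OF iso] rank_delta_minus[of k] assms(3) by simp
  then have "r mod 3 = 0 \<and> 3 * k - 3 = r"
    using \<open>2 \<le> k\<close> by presburger
  then show ?thesis
    using \<open>2 \<le> k\<close> iso by auto
next
  fix k assume "2 \<le> k" and iso: "isomorphic G (delta_plus k)"
  then have "3 * int k - 1 = int r"
    using isomorphic_rank[OF iso] rank_delta_plus[of k] assms(3) by simp
  then have "r mod 3 = 2 \<and> 3 * k - 1 = r"
    using \<open>2 \<le> k\<close> by presburger
  then show ?thesis
    using \<open>2 \<le> k\<close> iso by auto
qed

end
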